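(* Let $C=(c_{ij})_{1\le i,j\le 8}$ be the Cartan matrix of type $E_8$: $c_{ii}=2$, $c_{ij}=c_{ji}=-1$ for $\{i,j\} \in \{\{1,3\},\{3,4\},\{4,5\},\{5,6\},\{6,7\},\{7,8\},\{2,4\}\}$, and $c_{ij}=0$ otherwise. Let $e_1,\dots,e_8$ be the standard basis of $\mathbb{Z}^8$, define $s_i \in \mathrm{GL}_8(\mathbb{Z})$ by $s_i(e_j) = e_j - c_{ji} e_i$, and let $w = s_7 s_8 s_6 s_2 s_1 s_3 s_4 s_5$. Then for every prime power $q$, the group $\mathbb{Z}^8/(q w - \mathrm{id})\mathbb{Z}^8$ is cyclic of order $\Phi_{30}(q) = q^8+q^7-q^5-q^4-q^3+q+1$, the $30$-th cyclotomic polynomial evaluated at $q$. *)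

theory Defs
  imports "HOL-Algebra.Elementary_Groups" "HOL-Algebra.Product_Groups" "HOL-Algebra.Coset" "HOL-Computational_Algebra.Primes"
begin

text \<open>Cartan matrix of type E8, indices 1..8 (Bourbaki numbering as in the paper).\<close>
definition cartanE8 :: "nat \<Rightarrow> nat \<Rightarrow> int" where
  "cartanE8 i j =
     (if i = j \<and> i \<in> {1..8} then 2
      else if {i, j} \<in> {{1,3},{3,4},{4,5},{5,6},{6,7},{7,8},{2,4}} then -1
      else 0)"

definition Z8 :: "(nat \<Rightarrow> int) monoid" where
  "Z8 = product_group {1..8} (\<lambda>_. integer_group)"

definition stdbasis :: "nat \<Rightarrow> nat \<Rightarrow> int" where
  "stdbasis i = (\<lambda>j\<in>{1..8}. if j = i then 1 else 0)"

text \<open>Simple reflection s_i: the linear map with s_i(e_j) = e_j - c_{ji} e_i,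
  i.e. s_i(v) = v - (\<Sum>_j c_{ji} v_j) e_i.\<close>
definition simple_refl :: "nat \<Rightarrow> (nat \<Rightarrow> int) \<Rightarrow> (nat \<Rightarrow> int)" where
  "simple_refl i v =
     (\<lambda>j\<in>{1..8}. v j - (\<Sum>k\<in>{1..8}. cartanE8 k i * v k) * stdbasis i j)"

definition coxeter_w :: "(nat \<Rightarrow> int) \<Rightarrow> (nat \<Rightarrow> int)" where
  "coxeter_w = simple_refl 7 \<circ> simple_refl 8 \<circ> simple_refl 6 \<circ> simple_refl 2 \<circ>
               simple_refl 1 \<circ> simple_refl 3 \<circ> simple_refl 4 \<circ> simple_refl 5"

definition qw_minus_id :: "int \<Rightarrow> (nat \<Rightarrow> int) \<Rightarrow> (nat \<Rightarrow> int)" where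
  "qw_minus_id q v = (\<lambda>j\<in>{1..8}. q * coxeter_w v j - v j)"

definition coker_group :: "int \<Rightarrow> (nat \<Rightarrow> int) set monoid" where
  "coker_group q = Z8 Mod (qw_minus_id q ` carrier Z8)"

definition prime_power :: "nat \<Rightarrow> bool" where
  "prime_power q \<longleftrightarrow> (\<exists>p k. prime (p::nat) \<and> k \<ge> 1 \<and> q = p ^ k)"

end

theory Submission
  imports Defs
begin

text \<open>The Coxeter element \<open>w\<close> of \<open>E\<^sub>8\<close> has characteristic polynomial \<open>\<Phi>\<^sub>30\<close>, so
  \<open>q w - id\<close> has determinant \<open>\<Phi>\<^sub>30(q)\<close> up to sign; the point is that its cokernel is cyclic.
  We exhibit an integral linear form \<open>\<lambda>\<close>, with polynomial coefficients in \<open>q\<close>, such that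
  \<open>\<lambda> \<circ> (q w - id)\<close> is divisible by \<open>\<Phi>\<^sub>30(q)\<close> and \<open>\<lambda>\<close> takes the value \<open>1\<close>, together with an
  integral preimage under \<open>q w - id\<close> of every vector \<open>v\<close> with \<open>\<Phi>\<^sub>30(q) dvd \<lambda>(v)\<close>. Hence
  \<open>v \<mapsto> \<lambda>(v) mod \<Phi>\<^sub>30(q)\<close> is a surjection onto \<open>\<int>/\<Phi>\<^sub>30(q)\<close> whose kernel is the image
  of \<open>q w - id\<close>. Nothing about \<open>q\<close> is used beyond \<open>\<Phi>\<^sub>30(q) > 0\<close>, which holds for every
  integer.\<close>

definition vec8 :: "int \<Rightarrow> int \<Rightarrow> int \<Rightarrow> int \<Rightarrow> int \<Rightarrow> int \<Rightarrow> int \<Rightarrow> int \<Rightarrow> nat \<Rightarrow> int" where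
  "vec8 x1 x2 x3 x4 x5 x6 x7 x8 =
     (\<lambda>j\<in>{1..8}. if j = 1 then x1 else if j = 2 then x2 else if j = 3 then x3 else if j = 4 then x4
                 else if j = 5 then x5 else if j = 6 then x6 else if j = 7 then x7 else x8)"

lemma vec8_apply [simp]:
  "vec8 x1 x2 x3 x4 x5 x6 x7 x8 1 = x1" "vec8 x1 x2 x3 x4 x5 x6 x7 x8 2 = x2"
  "vec8 x1 x2 x3 x4 x5 x6 x7 x8 3 = x3" "vec8 x1 x2 x3 x4 x5 x6 x7 x8 4 = x4"
  "vec8 x1 x2 x3 x4 x5 x6 x7 x8 5 = x5" "vec8 x1 x2 x3 x4 x5 x6 x7 x8 6 = x6"
  "vec8 x1 x2 x3 x4 x5 x6 x7 x8 7 = x7" "vec8 x1 x2 x3 x4 x5 x6 x7 x8 8 = x8"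
  by (simp_all add: vec8_def)

lemma vec8_in_carrier_Z8 [simp]: "vec8 x1 x2 x3 x4 x5 x6 x7 x8 \<in> carrier Z8"
  by (simp add: vec8_def Z8_def)

lemma extensional_vec8:
  assumes "f \<in> extensional {1..8}"
  shows "f = vec8 (f 1) (f 2) (f 3) (f 4) (f 5) (f 6) (f 7) (f 8)"
proof
  fix j
  show "f j = vec8 (f 1) (f 2) (f 3) (f 4) (f 5) (f 6) (f 7) (f 8) j"
    using assms by (cases "j \<in> {1..8}") (auto simp: vec8_def extensional_def eval_nat_numeral le_Suc_eq)
qed

lemma restrict_eq_vec8:
  "(\<lambda>j\<in>{1..8}. f j) = vec8 (f 1) (f 2) (f 3) (f 4) (f 5) (f 6) (f 7) (f 8)"
  by (rule ext) (auto simp: vec8_def eval_nat_numeral le_Suc_eq)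

lemma carrier_Z8_vec8:
  "v \<in> carrier Z8 \<Longrightarrow> v = vec8 (v 1) (v 2) (v 3) (v 4) (v 5) (v 6) (v 7) (v 8)"
  by (rule extensional_vec8) (simp add: Z8_def PiE_def)

lemma vec8_eq_iff:
  "vec8 x1 x2 x3 x4 x5 x6 x7 x8 = vec8 y1 y2 y3 y4 y5 y6 y7 y8 \<longleftrightarrow>
     x1 = y1 \<and> x2 = y2 \<and> x3 = y3 \<and> x4 = y4 \<and> x5 = y5 \<and> x6 = y6 \<and> x7 = y7 \<and> x8 = y8"
  by (metis vec8_apply)

lemma sum_atLeastAtMost_1_8:
  "(\<Sum>k\<in>{1..8::nat}. f k) = f 1 + f 2 + f 3 + f 4 + f 5 + f 6 + f 7 + f 8"
  by (simp add: eval_nat_numeral atLeastAtMostSuc_conv add.commute add.left_commute)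

lemma simple_refl_vec8:
  "simple_refl 1 (vec8 x1 x2 x3 x4 x5 x6 x7 x8) = vec8 (x3 - x1) x2 x3 x4 x5 x6 x7 x8"
  "simple_refl 2 (vec8 x1 x2 x3 x4 x5 x6 x7 x8) = vec8 x1 (x4 - x2) x3 x4 x5 x6 x7 x8"
  "simple_refl 3 (vec8 x1 x2 x3 x4 x5 x6 x7 x8) = vec8 x1 x2 (x1 + x4 - x3) x4 x5 x6 x7 x8"
  "simple_refl 4 (vec8 x1 x2 x3 x4 x5 x6 x7 x8) = vec8 x1 x2 x3 (x2 + x3 + x5 - x4) x5 x6 x7 x8"
  "simple_refl 5 (vec8 x1 x2 x3 x4 x5 x6 x7 x8) = vec8 x1 x2 x3 x4 (x4 + x6 - x5) x6 x7 x8"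
  "simple_refl 6 (vec8 x1 x2 x3 x4 x5 x6 x7 x8) = vec8 x1 x2 x3 x4 x5 (x5 + x7 - x6) x7 x8"
  "simple_refl 7 (vec8 x1 x2 x3 x4 x5 x6 x7 x8) = vec8 x1 x2 x3 x4 x5 x6 (x6 + x8 - x7) x8"
  "simple_refl 8 (vec8 x1 x2 x3 x4 x5 x6 x7 x8) = vec8 x1 x2 x3 x4 x5 x6 x7 (x7 - x8)"
  \<comment> \<open>\<open>vec8_apply\<close> is unfolded rather than simplified with: the simp rule \<open>One_nat_def\<close>
    would first turn the index \<open>1\<close> into \<open>Suc 0\<close>.\<close>
  unfolding simple_refl_def restrict_eq_vec8 stdbasis_def sum_atLeastAtMost_1_8 vec8_apply
  by (simp_all add: vec8_eq_iff cartanE8_def doubleton_eq_iff)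

lemma coxeter_w_vec8:
  "coxeter_w (vec8 x1 x2 x3 x4 x5 x6 x7 x8) =
     vec8 (x2 - x5 + x6) (x3 - x5 + x6) (x1 + x2 - x5 + x6) (x2 + x3 - x5 + x6)
          (x4 - x5 + x6) (x4 - x5 + x7) (x4 - x5 + x7 - x8) (x7 - x8)"
  unfolding coxeter_w_def comp_def simple_refl_vec8 by (simp add: vec8_eq_iff)

lemma qw_minus_id_vec8:
  "qw_minus_id Q (vec8 x1 x2 x3 x4 x5 x6 x7 x8) =
     vec8 (Q * (x2 - x5 + x6) - x1) (Q * (x3 - x5 + x6) - x2) (Q * (x1 + x2 - x5 + x6) - x3)
          (Q * (x2 + x3 - x5 + x6) - x4) (Q * (x4 - x5 + x6) - x5) (Q * (x4 - x5 + x7) - x6)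
          (Q * (x4 - x5 + x7 - x8) - x7) (Q * (x7 - x8) - x8)"
  unfolding qw_minus_id_def coxeter_w_vec8 restrict_eq_vec8 vec8_apply ..

definition cyclotomic30 :: "int \<Rightarrow> int" where
  "cyclotomic30 Q = Q^8 + Q^7 - Q^5 - Q^4 - Q^3 + Q + 1"

text \<open>The coefficients of \<open>coker_functional\<close> and \<open>qw_preimage\<close> were found by computer; the
  proofs below only verify the polynomial identities they satisfy.\<close>

definition coker_functional :: "int \<Rightarrow> (nat \<Rightarrow> int) \<Rightarrow> int" where
  "coker_functional Q v =
     Q^7 * v 1 + (Q^3 + Q^5 - 1) * v 2 + Q^6 * v 3 + (1 - Q^3) * v 4 + (Q - Q^4 - Q^5 - Q^6) * v 5
     + (Q^2 + Q^3 + Q^4 - 1 - Q - Q^7) * v 6 + (Q^4 + Q^5 - Q^2) * v 7 + (1 - Q^4 - Q^5 + Q^7) * v 8"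

lemma coker_functional_qw_minus_id:
  "coker_functional Q (qw_minus_id Q (vec8 x1 x2 x3 x4 x5 x6 x7 x8)) =
     cyclotomic30 Q * (x2 - x4 + x6 - x8)"
  unfolding qw_minus_id_vec8 coker_functional_def vec8_apply cyclotomic30_def by algebra

lemma coker_functional_generator: "coker_functional Q (vec8 0 m m (2 * m) m m m m) = m"
  unfolding coker_functional_def vec8_apply by (simp add: ring_distribs; algebra)

definition qw_preimage :: "int \<Rightarrow> int \<Rightarrow> (nat \<Rightarrow> int) \<Rightarrow> nat \<Rightarrow> int" where
  "qw_preimage Q t v = vec8
     (- (1 + Q^3 + Q^5 + Q^6) * v 1 - (2 * Q + Q^2 + Q^3 + Q^4) * v 2 - (Q^2 + Q^4 + Q^5) * v 3
      + (Q + Q^2) * v 4 + (Q + 2 * Q^2 + 2 * Q^3 + 2 * Q^4 + Q^5) * v 5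
      + (Q^5 + Q^6 - 2 * Q - 2 * Q^2) * v 6 - (Q^2 + 2 * Q^3 + Q^4) * v 7
      + (Q + Q^2 + Q^3 + Q^4 - Q^5 - Q^6) * v 8
      + (Q^5 + 2 * Q^6 + Q^7 - Q - 2 * Q^2 - Q^3) * t)
     (- (Q^2 + Q^4 + Q^5 + Q^6) * v 1 - (2 + Q + 2 * Q^2 + Q^3 + Q^4) * v 2
      - (Q + Q^3 + Q^4 + Q^5) * v 3 + (1 + Q + Q^2) * v 4
      + (2 * Q + 2 * Q^2 + 3 * Q^3 + 2 * Q^4 + Q^5) * v 5
      + (Q^4 + Q^5 + Q^6 - 1 - 3 * Q - Q^2 - Q^3) * v 6 - (2 * Q^2 + 2 * Q^3 + Q^4) * v 7
      + (1 + Q + Q^2 + 2 * Q^3 - Q^5 - Q^6) * v 8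
      + (2 * Q^5 + 2 * Q^6 + Q^7 - 1 - 2 * Q - 2 * Q^2 - Q^3) * t)
     (- (Q + Q^3 + Q^4 + Q^5 + 2 * Q^6) * v 1 - (1 + 2 * Q + 3 * Q^2 + Q^3 + 2 * Q^4) * v 2
      - (1 + Q^2 + Q^3 + Q^4 + 2 * Q^5) * v 3 + (1 + Q + 2 * Q^2) * v 4
      + (2 * Q + 3 * Q^2 + 4 * Q^3 + 3 * Q^4 + 2 * Q^5) * v 5
      + (Q^4 + Q^5 + 2 * Q^6 - 1 - 3 * Q - 3 * Q^2 - Q^3) * v 6 - (2 * Q^2 + 3 * Q^3 + 2 * Q^4) * v 7
      + (1 + Q + 2 * Q^2 + 2 * Q^3 + Q^4 - Q^5 - 2 * Q^6) * v 8
      + (2 * Q^5 + 3 * Q^6 + 2 * Q^7 - 1 - 2 * Q - 3 * Q^2 - 2 * Q^3) * t)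
     (- (Q^2 + Q^3 + Q^4 + 2 * Q^5 + 2 * Q^6) * v 1 - (2 + 3 * Q + 3 * Q^2 + 2 * Q^3 + 2 * Q^4) * v 2
      - (Q + Q^2 + Q^3 + 2 * Q^4 + 2 * Q^5) * v 3 + (1 + 2 * Q + 2 * Q^2) * v 4
      + (3 * Q + 4 * Q^2 + 5 * Q^3 + 4 * Q^4 + 2 * Q^5) * v 5
      + (Q^4 + 2 * Q^5 + 2 * Q^6 - 2 - 5 * Q - 3 * Q^2 - Q^3) * v 6 - (3 * Q^2 + 4 * Q^3 + 2 * Q^4) * v 7
      + (2 + 2 * Q + 2 * Q^2 + 3 * Q^3 + Q^4 - 2 * Q^5 - 2 * Q^6) * v 8
      + (3 * Q^5 + 4 * Q^6 + 2 * Q^7 - 2 - 4 * Q - 4 * Q^2 - 2 * Q^3) * t)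
     (- (Q^3 + Q^4 + Q^5 + 2 * Q^6) * v 1 - (1 + 2 * Q + 3 * Q^2 + Q^3 + 2 * Q^4) * v 2
      - (Q^2 + Q^3 + Q^4 + 2 * Q^5) * v 3 + (1 + Q + 2 * Q^2) * v 4
      + (2 * Q + 3 * Q^2 + 4 * Q^3 + 3 * Q^4 + 2 * Q^5 - 1) * v 5
      + (Q^4 + Q^5 + 2 * Q^6 - 1 - 4 * Q - 3 * Q^2 - Q^3) * v 6 - (2 * Q^2 + 3 * Q^3 + 2 * Q^4) * v 7
      + (1 + 2 * Q + 2 * Q^2 + 2 * Q^3 + Q^4 - Q^5 - 2 * Q^6) * v 8
      + (2 * Q^5 + 3 * Q^6 + 2 * Q^7 - 1 - 3 * Q - 4 * Q^2 - 2 * Q^3) * t)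
     (- (Q^3 + Q^4 + Q^5 + Q^6) * v 1 - (1 + 2 * Q + 2 * Q^2 + Q^3 + Q^4) * v 2
      - (Q^2 + Q^3 + Q^4 + Q^5) * v 3 + (1 + Q + Q^2) * v 4
      + (2 * Q + 3 * Q^2 + 3 * Q^3 + 2 * Q^4 + Q^5) * v 5
      + (Q^4 + Q^5 + Q^6 - 2 - 3 * Q - 2 * Q^2) * v 6 - (Q + 2 * Q^2 + 2 * Q^3 + Q^4) * v 7
      + (1 + 2 * Q + 2 * Q^2 + Q^3 - Q^5 - Q^6) * v 8
      + (Q^4 + 2 * Q^5 + 2 * Q^6 + Q^7 - 1 - 3 * Q - 3 * Q^2 - Q^3) * t)
     (- (Q^3 + Q^4 + Q^6) * v 1 - (1 + Q + 2 * Q^2 + Q^4) * v 2 - (Q^2 + Q^3 + Q^5) * v 3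
      + (1 + Q^2) * v 4 + (2 * Q + 2 * Q^2 + 2 * Q^3 + Q^4 + Q^5) * v 5
      + (Q^4 + Q^6 - 1 - 2 * Q - Q^2) * v 6 - (1 + Q + Q^2 + Q^3 + Q^4) * v 7
      + (1 + 2 * Q + Q^2 - Q^6) * v 8
      + (Q^4 + Q^5 + Q^6 + Q^7 - 1 - 2 * Q - 2 * Q^2) * t)
     (v 4 - Q^4 * v 1 - (1 + Q^2) * v 2 - Q^3 * v 3 + (Q + Q^2 + Q^3) * v 5
      + (Q^4 - 1 - Q) * v 6 - (Q + Q^2) * v 7 + (Q + Q^2 - Q^4) * v 8
      + (Q^4 + Q^5 - 1 - Q - Q^2) * t)"

lemma qw_minus_id_qw_preimage:
  assumes "coker_functional Q (vec8 x1 x2 x3 x4 x5 x6 x7 x8) = cyclotomic30 Q * t"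
  shows "qw_minus_id Q (qw_preimage Q t (vec8 x1 x2 x3 x4 x5 x6 x7 x8)) = vec8 x1 x2 x3 x4 x5 x6 x7 x8"
proof -
  define d where "d = coker_functional Q (vec8 x1 x2 x3 x4 x5 x6 x7 x8) - cyclotomic30 Q * t"
  have "qw_minus_id Q (qw_preimage Q t (vec8 x1 x2 x3 x4 x5 x6 x7 x8)) =
      vec8 x1 (x2 - d) (x3 - d) (x4 - 2 * d) (x5 - d) (x6 - d) (x7 - d) (x8 - d)"
    unfolding qw_preimage_def vec8_apply qw_minus_id_vec8 vec8_eq_iff d_def
      coker_functional_def cyclotomic30_def
    by (intro conjI; simp add: ring_distribs; algebra)
  moreover have "d = 0"
    using assms by (simp add: d_def)
  ultimately show ?thesis
    by simp
qed

lemma cyclotomic30_pos: "cyclotomic30 Q > 0"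
proof -
  consider "Q \<ge> 1" | "Q = 0" | "Q \<le> -1" by linarith
  then show ?thesis
  proof cases
    case 1
    have "cyclotomic30 Q = (Q^3 - 1) * (Q^5 + Q^4 - 1) + Q"
      by (simp add: cyclotomic30_def ring_distribs; algebra)
    moreover have "(Q^3 - 1) * (Q^5 + Q^4 - 1) \<ge> 0"
      using 1 one_le_power[of Q 3] one_le_power[of Q 5] zero_le_power[of Q 4]
      by (intro mult_nonneg_nonneg) linarith+
    ultimately show ?thesis
      using 1 by linarith
  next
    case 2
    then show ?thesis by (simp add: cyclotomic30_def)
  next
    case 3
    define a where "a = - Q"
    have "cyclotomic30 Q = a^7 * (a - 1) + a^4 * (a - 1) + a * (a^2 - 1) + 1"
      by (simp add: cyclotomic30_def a_def ring_distribs; algebra)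
    moreover have "a \<ge> 1" using 3 by (simp add: a_def)
    ultimately show ?thesis
      by (simp add: one_le_power add_nonneg_nonneg)
  qed
qed

lemma cyclic_integer_mod_group: "cyclic_group (integer_mod_group n)"
proof -
  have "(\<lambda>m. m mod int n) \<in> epi integer_group (integer_mod_group n)"
  proof -
    have "range (\<lambda>m. m mod int n) = carrier (integer_mod_group n)"
      by (force simp: carrier_integer_mod_group image_iff intro: mod_pos_pos_trivial[symmetric])
    then show ?thesis
      by (auto simp: epi_def hom_def mod_add_eq carrier_integer_mod_group)
  qed
  then show ?thesis
    by (rule group.cyclic_group_epimorphic_image[OF group_integer_group _ cyclic_integer_group]) simp
qed

lemma FactGroup_kernel_integer_mod_group:
  assumes "group_hom G (integer_mod_group n) h"
    and "h ` carrier G = carrier (integer_mod_group n)" and "n > 0"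
  shows "cyclic_group (G Mod kernel G (integer_mod_group n) h)"
    and "order (G Mod kernel G (integer_mod_group n) h) = n"
proof -
  interpret group_hom G "integer_mod_group n" h by (fact assms(1))
  have iso: "G Mod kernel G (integer_mod_group n) h \<cong> integer_mod_group n"
    using FactGroup_iso assms(2) .
  show "cyclic_group (G Mod kernel G (integer_mod_group n) h)"
    using isomorphic_group_cyclicity[OF iso] cyclic_integer_mod_group
      normal.factorgroup_is_group[OF normal_kernel] by simp
  show "order (G Mod kernel G (integer_mod_group n) h) = n"
    using iso_same_card[OF iso] assms(3) by (simp add: order_def carrier_integer_mod_group)
qed

lemma group_Z8: "group Z8"
  unfolding Z8_def by (rule product_group) simp

lemma coker_functional_mult:
  "coker_functional Q (x \<otimes>\<^bsub>Z8\<^esub> y) = coker_functional Q x + coker_functional Q y"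
  unfolding Z8_def coker_functional_def by (simp add: algebra_simps)

definition coker_hom :: "int \<Rightarrow> (nat \<Rightarrow> int) \<Rightarrow> int" where
  "coker_hom Q v = coker_functional Q v mod cyclotomic30 Q"

lemma coker_hom_group_hom:
  "group_hom Z8 (integer_mod_group (nat (cyclotomic30 Q))) (coker_hom Q)"
proof -
  have "coker_hom Q \<in> hom Z8 (integer_mod_group (nat (cyclotomic30 Q)))"
    using cyclotomic30_pos[of Q]
    by (auto intro!: homI simp: coker_hom_def carrier_integer_mod_group coker_functional_mult mod_add_eq)
  then show ?thesis
    by (simp add: group_hom_def group_hom_axioms_def group_Z8)
qed

lemma coker_hom_surj:
  "coker_hom Q ` carrier Z8 = carrier (integer_mod_group (nat (cyclotomic30 Q)))"
proof -
  have "m \<in> coker_hom Q ` carrier Z8" if "0 \<le> m" "m < cyclotomic30 Q" for m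
  proof
    show "m = coker_hom Q (vec8 0 m m (2 * m) m m m m)"
      using that by (simp add: coker_hom_def coker_functional_generator)
  qed simp
  moreover have "coker_hom Q v \<in> {0..<cyclotomic30 Q}" for v
    using cyclotomic30_pos[of Q] by (simp add: coker_hom_def)
  ultimately show ?thesis
    using cyclotomic30_pos[of Q] by (auto simp: carrier_integer_mod_group)
qed

lemma kernel_coker_hom:
  "kernel Z8 (integer_mod_group (nat (cyclotomic30 Q))) (coker_hom Q) = qw_minus_id Q ` carrier Z8"
proof (intro equalityI subsetI)
  fix v
  assume "v \<in> qw_minus_id Q ` carrier Z8"
  then obtain u where u: "u \<in> carrier Z8" and v: "v = qw_minus_id Q u" by blast
  have "coker_functional Q v = cyclotomic30 Q * (u 2 - u 4 + u 6 - u 8)"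
    using coker_functional_qw_minus_id carrier_Z8_vec8[OF u] v by metis
  moreover have "v \<in> carrier Z8"
    using v by (simp add: qw_minus_id_def Z8_def)
  ultimately show "v \<in> kernel Z8 (integer_mod_group (nat (cyclotomic30 Q))) (coker_hom Q)"
    by (simp add: kernel_def coker_hom_def)
next
  fix v
  assume "v \<in> kernel Z8 (integer_mod_group (nat (cyclotomic30 Q))) (coker_hom Q)"
  then have v: "v \<in> carrier Z8" and "cyclotomic30 Q dvd coker_functional Q v"
    by (auto simp: kernel_def coker_hom_def)
  then obtain t where "coker_functional Q v = cyclotomic30 Q * t"
    by blast
  then have "qw_minus_id Q (qw_preimage Q t v) = v"
    using qw_minus_id_qw_preimage carrier_Z8_vec8[OF v] by metis
  moreover have "qw_preimage Q t v \<in> carrier Z8"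
    by (simp add: qw_preimage_def)
  ultimately show "v \<in> qw_minus_id Q ` carrier Z8"
    by (metis image_eqI)
qed

theorem coker_group_cyclic_of_order_cyclotomic30:
  "cyclic_group (coker_group Q) \<and> int (order (coker_group Q)) = cyclotomic30 Q"
  using FactGroup_kernel_integer_mod_group[OF coker_hom_group_hom coker_hom_surj] cyclotomic30_pos[of Q]
  by (simp add: coker_group_def kernel_coker_hom)

theorem mainTheorem6:
  fixes q :: nat
  assumes "prime_power q"
  shows "cyclic_group (coker_group (int q)) \<and>
         int (order (coker_group (int q))) =
           int q ^ 8 + int q ^ 7 - int q ^ 5 - int q ^ 4 - int q ^ 3 + int q + 1"
  using coker_group_cyclic_of_order_cyclotomic30[of "int q"] by (simp add: cyclotomic30_def)

end
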